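(* Let $f$ be a linear Anosov diffeomorphism of $\mathbb{T}^2$ induced by an integer matrix $L$ with $\det L=-1$ (orientation-reversing). Then for every linear involution $R$ of $\mathbb{T}^2$ (induced by an integer matrix $A$ with $\det A=\pm1$ and $R\circ R=\mathrm{Id}$), $f$ is not $R$-reversible, i.e. $R\circ f\neq f^{-1}\circ R$.
   Context: $\mathbb{T}^2=\mathbb{R}^2/\mathbb{Z}^2$. A diffeomorphism of $\mathbb{T}^2$ induced by an integer matrix $M$ with $\det M=\pm1$ is the map $\pi(v)\mapsto\pi(Mv)$, $\pi$ the projection. A linear Anosov diffeomorphism is one induced by such a matrix with no eigenvalue of modulus one. $f$ is $R$-reversible if $R\circ f=f^{-1}\circ R$. *)

theory Defs
  imports "HOL-Analysis.Analysis"
begin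

text \<open>The torus T^2 = R^2/Z^2 is represented by its fundamental domain [0,1)^2;
  the projection pi sends v to its componentwise fractional part.\<close>

definition torus :: "(real^2) set" where
  "torus = {v. \<forall>i. 0 \<le> v$i \<and> v$i < 1}"

definition tproj :: "real^2 \<Rightarrow> real^2" where
  "tproj v = (\<chi> i. frac (v$i))"

definition unimodular :: "int^2^2 \<Rightarrow> bool" where
  "unimodular M \<longleftrightarrow> det M = 1 \<or> det M = -1"

definition induced :: "int^2^2 \<Rightarrow> real^2 \<Rightarrow> real^2" where
  "induced M v = tproj ((\<chi> i j. real_of_int (M$i$j)) *v v)"

definition hyperbolic :: "int^2^2 \<Rightarrow> bool" where
  "hyperbolic M \<longleftrightarrow>
     (\<forall>(c::complex) (v::complex^2). v \<noteq> 0 \<and> (\<chi> i j. complex_of_int (M$i$j)) *v v = c *s v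
        \<longrightarrow> cmod c \<noteq> 1)"

definition linear_anosov :: "int^2^2 \<Rightarrow> bool" where
  "linear_anosov M \<longleftrightarrow> unimodular M \<and> hyperbolic M"

definition reversible_on_torus :: "(real^2 \<Rightarrow> real^2) \<Rightarrow> (real^2 \<Rightarrow> real^2) \<Rightarrow> bool" where
  "reversible_on_torus R f \<longleftrightarrow> (\<forall>x\<in>torus. R (f x) = inv_into torus f (R x))"

end

theory Submission
  imports Defs
begin

text \<open>Reversibility on the torus lifts to the integer matrices: L A L = A, since a matrix is
  determined by the map it induces. Thus L is conjugate to its inverse, which for det L = -1 is
  -adj L, of trace -tr L; hence tr L = 0. By Cayley--Hamilton L^2 = 1, so L has the eigenvalue 1
  or -1, contradicting hyperbolicity.\<close>

lemma induced_component:
  "induced M v $ i = frac (real_of_int (M$i$1) * v$1 + real_of_int (M$i$2) * v$2)"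
  by (simp add: induced_def tproj_def matrix_vector_mult_def sum_2)

lemma frac_lincomb_frac:
  fixes a b :: int and u w :: real
  shows "frac (a * frac u + b * frac w) = frac (a * u + b * w)"
proof -
  have "a * frac u + b * frac w = (a * u + b * w) + of_int (- (a * floor u + b * floor w))"
    by (simp add: frac_def algebra_simps)
  then show ?thesis by (simp only: frac_add_of_int_right)
qed

lemma induced_induced: "induced M (induced N x) = induced (M ** N) x"
proof -
  have "induced M (induced N x) $ i = induced (M ** N) x $ i" for i
  proof -
    have "induced M (induced N x) $ i =
      frac (real_of_int (M$i$1) * frac (real_of_int (N$1$1) * x$1 + real_of_int (N$1$2) * x$2)
          + real_of_int (M$i$2) * frac (real_of_int (N$2$1) * x$1 + real_of_int (N$2$2) * x$2))"
      by (simp add: induced_component)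
    also have "\<dots> = frac (real_of_int (M$i$1) * (real_of_int (N$1$1) * x$1 + real_of_int (N$1$2) * x$2)
          + real_of_int (M$i$2) * (real_of_int (N$2$1) * x$1 + real_of_int (N$2$2) * x$2))"
      by (rule frac_lincomb_frac)
    also have "\<dots> = induced (M ** N) x $ i"
      by (simp add: induced_component matrix_matrix_mult_def sum_2 algebra_simps)
    finally show ?thesis .
  qed
  then show ?thesis by (simp add: vec_eq_iff)
qed

lemma induced_in_torus: "induced M x \<in> torus"
  by (simp add: torus_def induced_def tproj_def frac_lt_1)

lemma induced_mat_1: "x \<in> torus \<Longrightarrow> induced (mat 1) x = x"
  by (simp add: induced_component vec_eq_iff forall_2 mat_def torus_def)

lemma frac_eq_imp_diff_Ints: "frac a = frac b \<Longrightarrow> a - b \<in> \<int>"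
  by (metis frac_def diff_diff_eq2 add_diff_cancel_left' Ints_of_int Ints_diff diff_add_cancel)

text \<open>Test on the points t e_j with t small enough that (M_ij - N_ij) t is integral only when it is 0.\<close>
lemma induced_eq_on_torus_imp_eq:
  assumes "\<forall>x\<in>torus. induced M x = induced N x"
  shows "M = N"
proof -
  have "M$i$j = N$i$j" for i j
  proof -
    define d where "d = M$i$j - N$i$j"
    define t :: real where "t = 1 / (\<bar>of_int d\<bar> + 2)"
    have t: "0 < t" "t < 1"
      by (auto simp: t_def)
    define x :: "real^2" where "x = axis j t"
    have "x \<in> torus" using t by (auto simp: x_def torus_def axis_def)
    then have "induced M x $ i = induced N x $ i" using assms by simp
    moreover have "\<And>K. induced K x $ i = frac (real_of_int (K$i$j) * t)"
      using exhaust_2[of j] by (auto simp: induced_component x_def axis_def)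
    ultimately have "real_of_int (M$i$j) * t - real_of_int (N$i$j) * t \<in> \<int>"
      by (metis frac_eq_imp_diff_Ints)
    then obtain k where k: "of_int d * t = of_int k"
      by (metis Ints_cases d_def left_diff_distrib of_int_diff)
    have "\<bar>of_int d * t\<bar> < 1"
      by (simp add: t_def abs_mult)
    then have "k = 0" using k by simp
    then show ?thesis using k t by (simp add: d_def)
  qed
  then show ?thesis by (simp add: vec_eq_iff)
qed

definition adj2 :: "'a::comm_ring_1^2^2 \<Rightarrow> 'a^2^2" where
  "adj2 M = vector [vector [M$2$2, - M$1$2], vector [- M$2$1, M$1$1]]"

lemma matrix_mult_adj2: "M ** adj2 M = mat (det M)"
  by (simp add: adj2_def vec_eq_iff forall_2 matrix_matrix_mult_def sum_2 mat_def det_2 algebra_simps)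

lemma adj2_matrix_mult: "adj2 M ** M = mat (det M)"
  by (simp add: adj2_def vec_eq_iff forall_2 matrix_matrix_mult_def sum_2 mat_def det_2 algebra_simps)

lemma trace_adj2: "trace (adj2 M) = trace M"
  by (simp add: adj2_def trace_def sum_2 ac_simps)

lemma mat_matrix_mult: "mat k ** M = (\<chi> i j. k * M$i$j :: 'a::semiring_1^'n^'m)"
  by (simp add: vec_eq_iff matrix_matrix_mult_def mat_def if_distrib[of "\<lambda>x. x * _"] cong: if_cong)

lemma trace_mat_matrix_mult: "trace (mat k ** M) = k * (trace M :: 'a::comm_semiring_1)"
  by (simp add: mat_matrix_mult trace_def sum_distrib_left)

lemma cayley_hamilton_2:
  fixes M :: "'a::comm_ring_1^2^2"
  shows "M ** M = mat (trace M) ** M - mat (det M)"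
  by (simp add: vec_eq_iff forall_2 trace_def matrix_matrix_mult_def sum_2 mat_def det_2 algebra_simps)

text \<open>A conjugates L to L^{-1} = -adj L; multiply by adj L on the left and adj A on the right,
  then compare traces.\<close>
lemma trace_eq_0_if_conjugate_to_inverse:
  fixes L A :: "'a::{idom,ring_char_0}^2^2"
  assumes det_L: "det L = -1" and det_A: "det A \<noteq> 0" and conj: "L ** (A ** L) = A"
  shows "trace L = 0"
proof -
  have "det A * trace L = trace (adj2 L ** (A ** adj2 A))"
    by (simp add: matrix_mult_adj2 trace_mul_sym[of "adj2 L"] trace_mat_matrix_mult trace_adj2)
  also have "\<dots> = trace ((adj2 L ** L) ** ((A ** L) ** adj2 A))"
    by (metis conj matrix_mul_assoc)
  also have "\<dots> = det L * trace (A ** (L ** adj2 A))"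
    by (simp only: adj2_matrix_mult trace_mat_matrix_mult matrix_mul_assoc[symmetric])
  also have "\<dots> = det L * trace (L ** (adj2 A ** A))"
    by (subst trace_mul_sym) (simp only: matrix_mul_assoc)
  also have "\<dots> = - (det A * trace L)"
    by (simp add: det_L adj2_matrix_mult trace_mul_sym[of L] trace_mat_matrix_mult)
  finally show ?thesis using det_A by simp
qed

lemma square_eq_1_if_trace_0_det_neg_1:
  fixes L :: "'a::comm_ring_1^2^2"
  assumes "det L = -1" and "trace L = 0"
  shows "L ** L = mat 1"
  using cayley_hamilton_2[of L] assms unfolding mat_matrix_mult by (simp add: vec_eq_iff mat_def)

lemma unimodular_right_inverse: "unimodular M \<Longrightarrow> M ** (adj2 M ** mat (det M)) = mat 1"
  unfolding matrix_mul_assoc matrix_mult_adj2 mat_matrix_mult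
  by (auto simp: unimodular_def vec_eq_iff mat_def)

text \<open>Any nonzero column of M + 1 is fixed by M.\<close>
lemma involution_has_fixed_vector:
  fixes M :: "'a::ring_1^'n^'n"
  assumes "M ** M = mat 1" and "M \<noteq> - mat 1"
  shows "\<exists>v. v \<noteq> 0 \<and> M *v v = v"
proof -
  have "M + mat 1 \<noteq> 0" using assms(2) by (simp add: eq_neg_iff_add_eq_0)
  then obtain i j where ij: "(M + mat 1) $ i $ j \<noteq> 0"
    by (auto simp: vec_eq_iff)
  define v where "v = (M + mat 1) *v axis j 1"
  have "v $ i \<noteq> 0"
    using ij by (simp add: v_def matrix_vector_mult_def axis_def if_distrib[of "\<lambda>x. _ * x"] cong: if_cong)
  moreover have "M *v v = v"
    by (simp add: v_def matrix_vector_mul_assoc matrix_add_ldistrib assms(1) add.commute)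
  ultimately show ?thesis by (metis zero_index)
qed

lemma map_matrix_of_int_mult:
  "map_matrix of_int (M ** N) = (map_matrix of_int M ** map_matrix of_int N :: 'a::comm_ring_1^'n^'m)"
  by (simp add: vec_eq_iff matrix_matrix_mult_def)

lemma trace_0_det_neg_1_not_hyperbolic:
  assumes "det L = -1" and "trace L = 0"
  shows "\<not> hyperbolic L"
proof
  assume hyp: "hyperbolic L"
  define Lc :: "complex^2^2" where "Lc = map_matrix of_int L"
  have "Lc ** Lc = map_matrix of_int (L ** L)"
    by (simp add: Lc_def map_matrix_of_int_mult)
  also have "\<dots> = mat 1"
    by (simp add: square_eq_1_if_trace_0_det_neg_1[OF assms] vec_eq_iff mat_def)
  finally have "Lc ** Lc = mat 1" .
  moreover have "Lc \<noteq> - mat 1"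
  proof
    assume "Lc = - mat 1"
    then have "(of_int (L$i$j) :: complex) = of_int ((- mat 1 :: int^2^2)$i$j)" for i j
      by (auto simp: Lc_def vec_eq_iff mat_def)
    then have "L = - mat 1"
      unfolding of_int_eq_iff by (simp add: vec_eq_iff)
    then show False using assms(1) by (simp add: det_2 mat_def)
  qed
  ultimately obtain v where "v \<noteq> 0" "Lc *v v = 1 *s v"
    using involution_has_fixed_vector by fastforce
  with hyp have "cmod 1 \<noteq> 1"
    unfolding hyperbolic_def Lc_def map_matrix_def by blast
  then show False by simp
qed

lemma unimodular_surj_on_torus:
  assumes "unimodular M" and "y \<in> torus"
  shows "y \<in> induced M ` torus"
proof
  show "y = induced M (induced (adj2 M ** mat (det M)) y)"
    using assms by (simp add: induced_induced unimodular_right_inverse induced_mat_1)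
qed (rule induced_in_torus)

lemma reversible_imp_conjugate_to_inverse:
  assumes "unimodular L" and "reversible_on_torus (induced A) (induced L)"
  shows "L ** (A ** L) = A"
proof (rule induced_eq_on_torus_imp_eq, intro ballI)
  fix x assume x: "x \<in> torus"
  have "induced A (induced L x) = inv_into torus (induced L) (induced A x)"
    using assms(2) x by (simp add: reversible_on_torus_def)
  then have "induced L (induced A (induced L x)) = induced A x"
    using f_inv_into_f[OF unimodular_surj_on_torus[OF assms(1) induced_in_torus]] by simp
  then show "induced (L ** (A ** L)) x = induced A x" by (simp add: induced_induced)
qed

theorem mainTheorem4:
  fixes L A :: "int^2^2"
  assumes "linear_anosov L"
    and "det L = -1"
    and "unimodular A"
    and "\<forall>x\<in>torus. induced A (induced A x) = x"
  shows "\<not> reversible_on_torus (induced A) (induced L)"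
proof
  assume "reversible_on_torus (induced A) (induced L)"
  then have "L ** (A ** L) = A"
    using assms(1) by (intro reversible_imp_conjugate_to_inverse) (auto simp: linear_anosov_def)
  moreover have "det A \<noteq> 0" using assms(3) by (auto simp: unimodular_def)
  ultimately have "trace L = 0"
    using assms(2) by (intro trace_eq_0_if_conjugate_to_inverse)
  then show False
    using assms(1,2) trace_0_det_neg_1_not_hyperbolic by (auto simp: linear_anosov_def)
qed

end
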